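(* Let $\xi_1,\dots,\xi_n\ge0$ with $\sum_k\xi_k=1$, let $j\in[n]$, and let $\phi(z_1,\dots,z_n)=\frac{\exp(z_j)}{\sum_{k=1}^n\xi_k\exp(z_k)}$. Then the (multivariate) Taylor series of $\phi$ at the origin has radius of convergence at least $1$; in particular it converges to $\phi(z)$ for all $z\in\mathbb{R}^n$ with $\|z\|_\infty\le1$. *)

theory Defs
  imports "HOL-Analysis.Analysis"
begin

text \<open>Points of R^n are represented as functions nat => real, of which only the
  coordinates 0..n-1 are relevant. Multi-indices are functions nat => nat
  supported in {..<n}.\<close>

definition partial_deriv :: "nat \<Rightarrow> ((nat \<Rightarrow> real) \<Rightarrow> real) \<Rightarrow> (nat \<Rightarrow> real) \<Rightarrow> real" where
  "partial_deriv k f x = deriv (\<lambda>t. f (x(k := t))) (x k)"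

fun iter_partials :: "nat list \<Rightarrow> ((nat \<Rightarrow> real) \<Rightarrow> real) \<Rightarrow> (nat \<Rightarrow> real) \<Rightarrow> real" where
  "iter_partials [] f = f"
| "iter_partials (k # ks) f = partial_deriv k (iter_partials ks f)"

definition multi_index_list :: "nat \<Rightarrow> (nat \<Rightarrow> nat) \<Rightarrow> nat list" where
  "multi_index_list n \<alpha> = concat (map (\<lambda>k. replicate (\<alpha> k) k) [0..<n])"

definition multi_indices :: "nat \<Rightarrow> (nat \<Rightarrow> nat) set" where
  "multi_indices n = {\<alpha>. \<forall>k\<ge>n. \<alpha> k = 0}"

definition taylor_coeff :: "nat \<Rightarrow> ((nat \<Rightarrow> real) \<Rightarrow> real) \<Rightarrow> (nat \<Rightarrow> nat) \<Rightarrow> real" where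
  "taylor_coeff n f \<alpha> =
     iter_partials (multi_index_list n \<alpha>) f (\<lambda>_. 0) / (\<Prod>k<n. fact (\<alpha> k))"

definition monomial :: "nat \<Rightarrow> (nat \<Rightarrow> nat) \<Rightarrow> (nat \<Rightarrow> real) \<Rightarrow> real" where
  "monomial n \<alpha> z = (\<Prod>k<n. z k ^ \<alpha> k)"

end

theory Submission
  imports Defs "HOL-Library.Real_Mod" "HOL-Complex_Analysis.Complex_Analysis"
begin

text \<open>For \<open>v\<close> in the closed complex unit polydisc, \<open>t \<mapsto> \<phi> (t v)\<close> is holomorphic and bounded
  on \<open>\<bar>t\<bar> \<le> 3/2\<close>: as \<open>3/2 < pi/2\<close>, every \<open>exp (t v\<^sub>k)\<close> has real part at least
  \<open>exp (-3/2) cos (3/2) > 0\<close>, and so has the convex combination in the denominator.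
  Its \<open>m\<close>-th Taylor coefficient at \<open>0\<close> is a homogeneous polynomial of degree \<open>m\<close> in \<open>v\<close>;
  averaging over roots of unity extracts its monomial coefficients, and the Cauchy estimate
  bounds them all by \<open>C (2/3)\<^sup>m\<close>. So the multivariate series converges absolutely on the closed
  unit cube, and grouping it by degree gives \<open>\<phi>\<close>. Finally, a power series converging on the
  open unit polydisc may be differentiated termwise in each coordinate, which identifies its
  coefficients with the Taylor coefficients \<open>D\<^sup>\<alpha> \<phi> (0) / \<alpha>!\<close>.\<close>

section \<open>Multi-indices\<close>

definition multi_degree :: "nat \<Rightarrow> (nat \<Rightarrow> nat) \<Rightarrow> nat" where
  "multi_degree n \<alpha> = (\<Sum>k<n. \<alpha> k)"

definition multi_indices_of_degree :: "nat \<Rightarrow> nat \<Rightarrow> (nat \<Rightarrow> nat) set" where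
  "multi_indices_of_degree n m = {\<alpha>\<in>multi_indices n. multi_degree n \<alpha> = m}"

lemma multi_degree_incr:
  "k < n \<Longrightarrow> multi_degree n (\<alpha>(k := \<alpha> k + 1)) = multi_degree n \<alpha> + 1"
proof -
  assume "k < n"
  have "\<alpha>(k := \<alpha> k + 1) = (\<lambda>l. \<alpha> l + (if l = k then 1 else 0))"
    by (auto simp: fun_eq_iff)
  with \<open>k < n\<close> show ?thesis
    by (simp add: multi_degree_def sum.distrib)
qed

lemma multi_indices_incr:
  "k < n \<Longrightarrow> \<alpha> \<in> multi_indices n \<Longrightarrow> \<alpha>(k := \<alpha> k + 1) \<in> multi_indices n"
  by (auto simp: multi_indices_def)

lemma component_le_multi_degree: "k < n \<Longrightarrow> \<alpha> k \<le> multi_degree n \<alpha>"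
  unfolding multi_degree_def by (rule member_le_sum) auto

lemma finite_multi_indices_box: "finite {\<alpha>\<in>multi_indices n. \<forall>k<n. \<alpha> k \<le> K}"
proof (rule finite_subset)
  show "{\<alpha>\<in>multi_indices n. \<forall>k<n. \<alpha> k \<le> K} \<subseteq>
        {\<alpha>. \<forall>k. (k \<in> {..<n} \<longrightarrow> \<alpha> k \<in> {..K}) \<and> (k \<notin> {..<n} \<longrightarrow> \<alpha> k = 0)}"
    by (auto simp: multi_indices_def)
  show "finite \<dots>" by (rule finite_set_of_finite_funs) auto
qed

lemma finite_multi_indices_of_degree: "finite (multi_indices_of_degree n m)"
  by (rule finite_subset[OF _ finite_multi_indices_box[of n m]])
     (auto simp: multi_indices_of_degree_def component_le_multi_degree)

lemma multi_indices_of_degree_0: "multi_indices_of_degree n 0 = {\<lambda>_. 0}"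
  by (auto simp: multi_indices_of_degree_def multi_indices_def multi_degree_def fun_eq_iff)
     (metis lessThan_iff not_less)

lemma sum_power_multi_degree_box:
  fixes q :: "'a :: comm_semiring_1"
  shows "(\<Sum>\<alpha>\<in>{\<alpha>\<in>multi_indices n. \<forall>k<n. \<alpha> k \<le> K}. q ^ multi_degree n \<alpha>) = (\<Sum>i\<le>K. q ^ i) ^ n"
proof -
  have "(\<Sum>\<alpha>\<in>{\<alpha>\<in>multi_indices n. \<forall>k<n. \<alpha> k \<le> K}. q ^ multi_degree n \<alpha>) =
        (\<Sum>g\<in>PiE {..<n} (\<lambda>_. {..K}). \<Prod>k<n. q ^ g k)"
    by (rule sum.reindex_bij_witness[where i="\<lambda>g k. if k < n then g k else 0"
          and j="\<lambda>\<alpha>. restrict \<alpha> {..<n}"])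
       (auto simp: multi_indices_def multi_degree_def power_sum PiE_def extensional_def
          fun_eq_iff intro!: prod.cong)
  also have "\<dots> = (\<Prod>k<n. \<Sum>i\<le>K. q ^ i)"
    by (rule prod_sum_PiE[symmetric]) auto
  also have "\<dots> = (\<Sum>i\<le>K. q ^ i) ^ n"
    by simp
  finally show ?thesis .
qed

lemma summable_on_power_multi_degree:
  fixes q :: real
  assumes "0 \<le> q" "q < 1"
  shows "(\<lambda>\<alpha>. q ^ multi_degree n \<alpha>) summable_on multi_indices n"
proof (rule nonneg_bdd_above_summable_on)
  show "0 \<le> q ^ multi_degree n \<alpha>" for \<alpha> using assms by simp
  show "bdd_above (sum (\<lambda>\<alpha>. q ^ multi_degree n \<alpha>) ` {F. F \<subseteq> multi_indices n \<and> finite F})"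
  proof (rule bdd_aboveI2)
    fix F assume "F \<in> {F. F \<subseteq> multi_indices n \<and> finite F}"
    hence F: "F \<subseteq> multi_indices n" "finite F" by auto
    define K where "K = Max (insert 0 ((\<lambda>(\<alpha>, k). \<alpha> k) ` (F \<times> {..<n})))"
    have "F \<subseteq> {\<alpha>\<in>multi_indices n. \<forall>k<n. \<alpha> k \<le> K}"
      using F unfolding K_def by (force intro: Max_ge)
    hence "sum (\<lambda>\<alpha>. q ^ multi_degree n \<alpha>) F \<le> (\<Sum>i\<le>K. q ^ i) ^ n"
      using assms unfolding sum_power_multi_degree_box[symmetric]
      by (intro sum_mono2 finite_multi_indices_box) auto
    also have "\<dots> \<le> (1 / (1 - q)) ^ n"
    proof (intro power_mono)
      have "(\<Sum>i\<le>K. q ^ i) = (\<Sum>i<Suc K. q ^ i)"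
        by (simp add: lessThan_Suc_atMost)
      also have "\<dots> = (1 - q ^ Suc K) / (1 - q)"
        using assms by (subst sum_gp_strict) auto
      also have "\<dots> \<le> 1 / (1 - q)" using assms by (intro divide_right_mono) auto
      finally show "(\<Sum>i\<le>K. q ^ i) \<le> 1 / (1 - q)" .
    qed (use assms in \<open>auto intro: sum_nonneg\<close>)
    finally show "sum (\<lambda>\<alpha>. q ^ multi_degree n \<alpha>) F \<le> (1 / (1 - q)) ^ n" .
  qed
qed

lemma has_sum_infsum_fibres:
  fixes f :: "'a \<Rightarrow> 'b :: {uniform_topological_group_add, topological_comm_monoid_add,
                          ab_group_add, complete_uniform_space, t2_space}"
  assumes "f summable_on A"
  shows "((\<lambda>i. infsum f {x\<in>A. p x = i}) has_sum infsum f A) UNIV"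
proof -
  have "inj_on snd (SIGMA i:UNIV. {x\<in>A. p x = i})" and "snd ` (SIGMA i:UNIV. {x\<in>A. p x = i}) = A"
    by (auto simp: inj_on_def image_iff)
  with assms have "((f \<circ> snd) has_sum infsum f A) (SIGMA i:UNIV. {x\<in>A. p x = i})"
    using has_sum_reindex by fastforce
  thus ?thesis
  proof (rule has_sum_Sigma')
    show "((\<lambda>x. (f \<circ> snd) (i, x)) has_sum infsum f {x\<in>A. p x = i}) {x\<in>A. p x = i}" for i
      using summable_on_subset[OF assms, of "{x\<in>A. p x = i}"] by auto
  qed
qed

lemma abs_monomial_le:
  assumes "\<And>l. l < n \<Longrightarrow> \<bar>x l\<bar> \<le> s"
  shows "\<bar>monomial n \<alpha> x\<bar> \<le> s ^ multi_degree n \<alpha>"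
proof -
  have "\<bar>monomial n \<alpha> x\<bar> = (\<Prod>l<n. \<bar>x l\<bar> ^ \<alpha> l)"
    by (simp add: monomial_def abs_prod power_abs)
  also have "\<dots> \<le> (\<Prod>l<n. s ^ \<alpha> l)" by (intro prod_mono) (auto intro: power_mono assms)
  also have "\<dots> = s ^ multi_degree n \<alpha>" by (simp add: multi_degree_def power_sum)
  finally show ?thesis .
qed

section \<open>Power series on the unit polydisc\<close>

definition coeffs_radius_ge_1 :: "nat \<Rightarrow> ((nat \<Rightarrow> nat) \<Rightarrow> real) \<Rightarrow> bool" where
  "coeffs_radius_ge_1 n b \<longleftrightarrow>
     (\<forall>r. 0 \<le> r \<and> r < 1 \<longrightarrow> (\<exists>C. \<forall>\<alpha>\<in>multi_indices n. \<bar>b \<alpha>\<bar> * r ^ multi_degree n \<alpha> \<le> C))"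

definition power_series_on_polydisc ::
    "nat \<Rightarrow> ((nat \<Rightarrow> nat) \<Rightarrow> real) \<Rightarrow> ((nat \<Rightarrow> real) \<Rightarrow> real) \<Rightarrow> bool" where
  "power_series_on_polydisc n b f \<longleftrightarrow> coeffs_radius_ge_1 n b \<and>
     (\<forall>x. (\<forall>l<n. \<bar>x l\<bar> < 1) \<longrightarrow> ((\<lambda>\<alpha>. b \<alpha> * monomial n \<alpha> x) has_sum f x) (multi_indices n))"

lemma coeffs_radius_ge_1D:
  assumes "coeffs_radius_ge_1 n b" "0 \<le> r" "r < 1"
  shows "\<exists>C. \<forall>\<alpha>\<in>multi_indices n. \<bar>b \<alpha>\<bar> * r ^ multi_degree n \<alpha> \<le> C"
  using assms unfolding coeffs_radius_ge_1_def by blast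

lemma coeffs_radius_ge_1_geometric:
  assumes "coeffs_radius_ge_1 n b" "0 \<le> r" "r < 1"
  shows "\<exists>q C. 0 \<le> q \<and> q < 1 \<and>
    (\<forall>\<alpha>\<in>multi_indices n. \<bar>b \<alpha>\<bar> * r ^ multi_degree n \<alpha> \<le> C * q ^ multi_degree n \<alpha>)"
proof -
  define \<rho> where "\<rho> = (r + 1) / 2"
  have \<rho>: "0 < \<rho>" "\<rho> < 1" "r < \<rho>" using assms by (auto simp: \<rho>_def)
  obtain C where C: "\<And>\<alpha>. \<alpha> \<in> multi_indices n \<Longrightarrow> \<bar>b \<alpha>\<bar> * \<rho> ^ multi_degree n \<alpha> \<le> C"
    using coeffs_radius_ge_1D[OF assms(1), of \<rho>] \<rho> by auto
  have "\<bar>b \<alpha>\<bar> * r ^ multi_degree n \<alpha> \<le> C * (r / \<rho>) ^ multi_degree n \<alpha>"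
    if "\<alpha> \<in> multi_indices n" for \<alpha>
  proof -
    have "\<bar>b \<alpha>\<bar> * r ^ multi_degree n \<alpha> = (\<bar>b \<alpha>\<bar> * \<rho> ^ multi_degree n \<alpha>) * (r / \<rho>) ^ multi_degree n \<alpha>"
      using \<rho> by (simp add: power_divide)
    also have "\<dots> \<le> C * (r / \<rho>) ^ multi_degree n \<alpha>"
      using C[OF that] assms \<rho> by (intro mult_right_mono) auto
    finally show ?thesis .
  qed
  moreover have "0 \<le> r / \<rho>" "r / \<rho> < 1" using assms \<rho> by auto
  ultimately show ?thesis by blast
qed

lemma summable_on_power_series:
  assumes "coeffs_radius_ge_1 n b" "\<And>l. l < n \<Longrightarrow> \<bar>x l\<bar> < 1"
  shows "(\<lambda>\<alpha>. b \<alpha> * monomial n \<alpha> x) summable_on multi_indices n"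
proof -
  define s where "s = Max (insert 0 ((\<lambda>l. \<bar>x l\<bar>) ` {..<n}))"
  have s0: "0 \<le> s" unfolding s_def by (intro Max_ge) auto
  have s1: "s < 1" unfolding s_def using assms(2) by (subst Max_less_iff) auto
  have xs: "\<bar>x l\<bar> \<le> s" if "l < n" for l unfolding s_def using that by (intro Max_ge) auto
  obtain q C where q: "0 \<le> q" "q < 1"
    and C: "\<And>\<alpha>. \<alpha> \<in> multi_indices n \<Longrightarrow> \<bar>b \<alpha>\<bar> * s ^ multi_degree n \<alpha> \<le> C * q ^ multi_degree n \<alpha>"
    using coeffs_radius_ge_1_geometric[OF assms(1) s0 s1] by blast
  have "(\<lambda>\<alpha>. \<bar>b \<alpha> * monomial n \<alpha> x\<bar>) summable_on multi_indices n"
  proof (rule summable_on_comparison_test)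
    show "(\<lambda>\<alpha>. C * q ^ multi_degree n \<alpha>) summable_on multi_indices n"
      by (intro summable_on_cmult_right summable_on_power_multi_degree q)
    fix \<alpha> assume "\<alpha> \<in> multi_indices n"
    have "\<bar>b \<alpha> * monomial n \<alpha> x\<bar> \<le> \<bar>b \<alpha>\<bar> * s ^ multi_degree n \<alpha>"
      unfolding abs_mult by (intro mult_left_mono abs_monomial_le xs) auto
    also have "\<dots> \<le> C * q ^ multi_degree n \<alpha>" by (rule C) fact
    finally show "\<bar>b \<alpha> * monomial n \<alpha> x\<bar> \<le> C * q ^ multi_degree n \<alpha>" .
  qed simp
  thus ?thesis
    using summable_on_iff_abs_summable_on_real[of "\<lambda>\<alpha>. b \<alpha> * monomial n \<alpha> x"] by simp
qed

definition partial_coeffs :: "nat \<Rightarrow> ((nat \<Rightarrow> nat) \<Rightarrow> real) \<Rightarrow> (nat \<Rightarrow> nat) \<Rightarrow> real" where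
  "partial_coeffs k b \<beta> = real (\<beta> k + 1) * b (\<beta>(k := \<beta> k + 1))"

lemma Suc_times_power_bounded:
  fixes q :: real
  assumes "0 \<le> q" "q < 1"
  shows "\<exists>K. \<forall>d. real (d + 1) * q ^ d \<le> K"
proof -
  have "(\<lambda>d. of_nat d * q ^ d) \<longlonglongrightarrow> 0"
    using assms by (intro powser_times_n_limit_0) auto
  hence "Bseq (\<lambda>d. of_nat d * q ^ d)" by (intro convergent_imp_Bseq convergentI)
  then obtain K where K: "\<And>d. norm (of_nat d * q ^ d) \<le> K" unfolding Bseq_def by blast
  have "real (d + 1) * q ^ d \<le> K + 1" for d
    using K[of d] power_le_one[OF assms(1) less_imp_le[OF assms(2)], of d] assms
    by (simp add: algebra_simps)
  thus ?thesis by blast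
qed

lemma coeffs_radius_ge_1_partial_coeffs:
  assumes "coeffs_radius_ge_1 n b" "k < n"
  shows "coeffs_radius_ge_1 n (partial_coeffs k b)"
  unfolding coeffs_radius_ge_1_def
proof (intro allI impI)
  fix r :: real assume r: "0 \<le> r \<and> r < 1"
  define \<rho> where "\<rho> = (r + 1) / 2"
  have \<rho>: "0 < \<rho>" "\<rho> < 1" "r < \<rho>" using r by (auto simp: \<rho>_def)
  obtain C where C: "\<And>\<alpha>. \<alpha> \<in> multi_indices n \<Longrightarrow> \<bar>b \<alpha>\<bar> * \<rho> ^ multi_degree n \<alpha> \<le> C"
    using coeffs_radius_ge_1D[OF assms(1), of \<rho>] \<rho> by auto
  obtain K where K: "\<And>d. real (d + 1) * (r / \<rho>) ^ d \<le> K"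
    using Suc_times_power_bounded[of "r / \<rho>"] r \<rho> by auto
  have "\<bar>partial_coeffs k b \<beta>\<bar> * r ^ multi_degree n \<beta> \<le> C / \<rho> * K" if "\<beta> \<in> multi_indices n" for \<beta>
  proof -
    define d where "d = multi_degree n \<beta>"
    define \<beta>' where "\<beta>' = \<beta>(k := \<beta> k + 1)"
    have \<beta>': "\<beta>' \<in> multi_indices n" "multi_degree n \<beta>' = d + 1"
      using multi_indices_incr[OF assms(2) that] multi_degree_incr[OF assms(2)]
      by (auto simp: \<beta>'_def d_def)
    have "0 \<le> \<bar>b \<beta>'\<bar> * \<rho> ^ multi_degree n \<beta>'" using \<rho> by simp
    with C[OF \<beta>'(1)] have "0 \<le> C" by linarith
    have b': "\<bar>b \<beta>'\<bar> \<le> C / \<rho> ^ (d + 1)"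
      using C[OF \<beta>'(1)] \<rho> \<beta>'(2) by (simp add: field_simps)
    have "\<bar>partial_coeffs k b \<beta>\<bar> * r ^ d = real (\<beta> k + 1) * \<bar>b \<beta>'\<bar> * r ^ d"
      by (simp add: partial_coeffs_def \<beta>'_def abs_mult)
    also have "\<dots> \<le> real (d + 1) * (C / \<rho> ^ (d + 1)) * r ^ d"
      using component_le_multi_degree[OF assms(2), of \<beta>] b' r
      by (intro mult_right_mono mult_mono) (auto simp: d_def)
    also have "\<dots> = C / \<rho> * (real (d + 1) * (r / \<rho>) ^ d)"
      using \<rho> by (simp add: power_divide field_simps)
    also have "\<dots> \<le> C / \<rho> * K" using K[of d] \<open>0 \<le> C\<close> \<rho> by (intro mult_left_mono) auto
    finally show ?thesis by (simp add: d_def)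
  qed
  thus "\<exists>C'. \<forall>\<beta>\<in>multi_indices n. \<bar>partial_coeffs k b \<beta>\<bar> * r ^ multi_degree n \<beta> \<le> C'" by blast
qed

text \<open>The one-variable power series in the \<open>k\<close>-th coordinate, the others frozen at \<open>x\<close>.\<close>
definition slice_coeffs :: "nat \<Rightarrow> nat \<Rightarrow> ((nat \<Rightarrow> nat) \<Rightarrow> real) \<Rightarrow> (nat \<Rightarrow> real) \<Rightarrow> nat \<Rightarrow> real" where
  "slice_coeffs n k b x i =
     infsum (\<lambda>\<alpha>. b \<alpha> * (\<Prod>l\<in>{..<n}-{k}. x l ^ \<alpha> l)) {\<alpha>\<in>multi_indices n. \<alpha> k = i}"

lemma monomial_upd:
  assumes "k < n"
  shows "monomial n \<alpha> (x(k := t)) = t ^ \<alpha> k * (\<Prod>l\<in>{..<n}-{k}. x l ^ \<alpha> l)"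
proof -
  have "monomial n \<alpha> (x(k := t)) = t ^ \<alpha> k * (\<Prod>l\<in>{..<n}-{k}. (x(k := t)) l ^ \<alpha> l)"
    unfolding monomial_def using assms by (subst prod.remove[of _ k]) auto
  also have "(\<Prod>l\<in>{..<n}-{k}. (x(k := t)) l ^ \<alpha> l) = (\<Prod>l\<in>{..<n}-{k}. x l ^ \<alpha> l)"
    by (intro prod.cong) auto
  finally show ?thesis .
qed

lemma infsum_monomial_slice:
  assumes "k < n"
  shows "infsum (\<lambda>\<alpha>. b \<alpha> * monomial n \<alpha> (x(k := t))) {\<alpha>\<in>multi_indices n. \<alpha> k = i}
           = slice_coeffs n k b x i * t ^ i"
proof -
  have "infsum (\<lambda>\<alpha>. b \<alpha> * monomial n \<alpha> (x(k := t))) {\<alpha>\<in>multi_indices n. \<alpha> k = i}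
      = infsum (\<lambda>\<alpha>. t ^ i * (b \<alpha> * (\<Prod>l\<in>{..<n}-{k}. x l ^ \<alpha> l))) {\<alpha>\<in>multi_indices n. \<alpha> k = i}"
    by (intro infsum_cong) (auto simp: monomial_upd[OF assms])
  also have "\<dots> = t ^ i * slice_coeffs n k b x i"
    by (simp add: infsum_cmult_right' slice_coeffs_def)
  finally show ?thesis by simp
qed

lemma power_series_on_polydisc_slice_sums:
  assumes f: "power_series_on_polydisc n b f" and "k < n"
    and x: "\<forall>l<n. \<bar>x l\<bar> < 1" and "\<bar>t\<bar> < 1"
  shows "(\<lambda>i. slice_coeffs n k b x i * t ^ i) sums f (x(k := t))"
proof -
  have xt: "\<forall>l<n. \<bar>(x(k := t)) l\<bar> < 1" using x \<open>\<bar>t\<bar> < 1\<close> by auto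
  define F where "F \<alpha> = b \<alpha> * monomial n \<alpha> (x(k := t))" for \<alpha>
  have "infsum F (multi_indices n) = f (x(k := t))"
    using f xt unfolding power_series_on_polydisc_def F_def by (simp add: infsumI)
  moreover have "F summable_on multi_indices n"
    using f xt summable_on_power_series unfolding F_def power_series_on_polydisc_def by simp
  ultimately have "((\<lambda>i. infsum F {\<alpha>\<in>multi_indices n. \<alpha> k = i}) has_sum f (x(k := t))) UNIV"
    using has_sum_infsum_fibres[of F "multi_indices n" "\<lambda>\<alpha>. \<alpha> k"] by simp
  thus ?thesis
    unfolding F_def infsum_monomial_slice[OF \<open>k < n\<close>] by (rule has_sum_imp_sums)
qed

lemma partial_deriv_power_series_on_polydisc:
  assumes f: "power_series_on_polydisc n b f" and "k < n" and x: "\<forall>l<n. \<bar>x l\<bar> < 1"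
  shows "partial_deriv k f x = (\<Sum>i. diffs (slice_coeffs n k b x) i * x k ^ i)"
proof -
  define c where "c = slice_coeffs n k b x"
  have "\<bar>x k\<bar> < 1" using x \<open>k < n\<close> by auto
  define K where "K = (\<bar>x k\<bar> + 1) / 2"
  have K: "\<bar>K\<bar> < 1" "norm (x k) < norm K" using \<open>\<bar>x k\<bar> < 1\<close> by (auto simp: K_def)
  have sums: "(\<lambda>i. c i * t ^ i) sums f (x(k := t))" if "\<bar>t\<bar> < 1" for t
    unfolding c_def using power_series_on_polydisc_slice_sums[OF f \<open>k < n\<close> x that] .
  have "((\<lambda>t. \<Sum>i. c i * t ^ i) has_field_derivative (\<Sum>i. diffs c i * x k ^ i)) (at (x k))"
    using termdiffs_strong[OF sums_summable[OF sums[OF K(1)]] K(2)] by simp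
  hence "((\<lambda>t. f (x(k := t))) has_field_derivative (\<Sum>i. diffs c i * x k ^ i)) (at (x k))"
  proof (rule has_field_derivative_transform_within_open[where S="ball 0 1"])
    show "(\<Sum>i. c i * t ^ i) = f (x(k := t))" if "t \<in> ball 0 1" for t
      using sums_unique[OF sums] that by simp
  qed (use \<open>\<bar>x k\<bar> < 1\<close> in auto)
  thus ?thesis
    unfolding partial_deriv_def c_def by (rule DERIV_imp_deriv)
qed

lemma slice_coeffs_partial_coeffs:
  assumes "k < n"
  shows "slice_coeffs n k (partial_coeffs k b) x = diffs (slice_coeffs n k b x)"
proof
  fix i
  define incr where "incr \<beta> = \<beta>(k := \<beta> k + 1)" for \<beta> :: "nat \<Rightarrow> nat"
  define w where "w \<alpha> = (\<Prod>l\<in>{..<n}-{k}. x l ^ \<alpha> l)" for \<alpha> :: "nat \<Rightarrow> nat"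
  have "inj_on incr {\<beta>\<in>multi_indices n. \<beta> k = i}"
  proof (rule inj_onI)
    fix \<beta> \<gamma> assume "incr \<beta> = incr \<gamma>"
    hence "incr \<beta> l = incr \<gamma> l" for l by simp
    thus "\<beta> = \<gamma>" unfolding incr_def by (metis fun_upd_apply add_right_cancel ext)
  qed
  moreover have im: "incr ` {\<beta>\<in>multi_indices n. \<beta> k = i} = {\<alpha>\<in>multi_indices n. \<alpha> k = Suc i}"
  proof (intro equalityI subsetI)
    fix \<alpha> assume \<alpha>: "\<alpha> \<in> {\<alpha>\<in>multi_indices n. \<alpha> k = Suc i}"
    hence "\<alpha> = incr (\<alpha>(k := i))" by (auto simp: incr_def fun_eq_iff)
    moreover have "\<alpha>(k := i) \<in> {\<beta>\<in>multi_indices n. \<beta> k = i}"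
      using \<alpha> assms by (auto simp: multi_indices_def)
    ultimately show "\<alpha> \<in> incr ` {\<beta>\<in>multi_indices n. \<beta> k = i}" by blast
  qed (use multi_indices_incr[OF assms] in \<open>auto simp: incr_def\<close>)
  ultimately have "infsum ((\<lambda>\<alpha>. b \<alpha> * w \<alpha>) \<circ> incr) {\<beta>\<in>multi_indices n. \<beta> k = i}
                   = slice_coeffs n k b x (Suc i)"
    unfolding slice_coeffs_def w_def by (subst im[symmetric]) (rule infsum_reindex[symmetric])
  moreover have "w (incr \<beta>) = w \<beta>" for \<beta> unfolding w_def incr_def by (intro prod.cong) auto
  ultimately have "infsum (\<lambda>\<beta>. real (i + 1) * (b (incr \<beta>) * w \<beta>)) {\<beta>\<in>multi_indices n. \<beta> k = i}
                   = real (Suc i) * slice_coeffs n k b x (Suc i)"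
    by (simp add: infsum_cmult_right' comp_def)
  moreover have "infsum (\<lambda>\<beta>. partial_coeffs k b \<beta> * w \<beta>) {\<beta>\<in>multi_indices n. \<beta> k = i}
       = infsum (\<lambda>\<beta>. real (i + 1) * (b (incr \<beta>) * w \<beta>)) {\<beta>\<in>multi_indices n. \<beta> k = i}"
    by (intro infsum_cong) (simp add: partial_coeffs_def incr_def)
  ultimately show "slice_coeffs n k (partial_coeffs k b) x i = diffs (slice_coeffs n k b x) i"
    by (simp add: slice_coeffs_def w_def diffs_def)
qed

lemma power_series_on_polydisc_partial_deriv:
  assumes f: "power_series_on_polydisc n b f" and "k < n"
  shows "power_series_on_polydisc n (partial_coeffs k b) (partial_deriv k f)"
proof -
  have b': "coeffs_radius_ge_1 n (partial_coeffs k b)"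
    using f \<open>k < n\<close> unfolding power_series_on_polydisc_def by (blast intro: coeffs_radius_ge_1_partial_coeffs)
  have "((\<lambda>\<beta>. partial_coeffs k b \<beta> * monomial n \<beta> x) has_sum partial_deriv k f x) (multi_indices n)"
    if x: "\<forall>l<n. \<bar>x l\<bar> < 1" for x
  proof -
    define G where "G = (\<lambda>\<beta>. partial_coeffs k b \<beta> * monomial n \<beta> (x(k := x k)))"
    have "G summable_on multi_indices n"
      unfolding G_def using summable_on_power_series[OF b'] x by simp
    hence "((\<lambda>i. infsum G {\<beta>\<in>multi_indices n. \<beta> k = i}) has_sum infsum G (multi_indices n)) UNIV"
      by (rule has_sum_infsum_fibres)
    hence "(\<lambda>i. diffs (slice_coeffs n k b x) i * x k ^ i) sums infsum G (multi_indices n)"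
      unfolding G_def infsum_monomial_slice[OF \<open>k < n\<close>] slice_coeffs_partial_coeffs[OF \<open>k < n\<close>]
      by (rule has_sum_imp_sums)
    hence "infsum G (multi_indices n) = partial_deriv k f x"
      using partial_deriv_power_series_on_polydisc[OF f \<open>k < n\<close> x] sums_unique by simp
    with has_sum_infsum[OF \<open>G summable_on multi_indices n\<close>] show ?thesis
      by (simp add: G_def)
  qed
  with b' show ?thesis unfolding power_series_on_polydisc_def by blast
qed

fun iter_partial_coeffs :: "nat list \<Rightarrow> ((nat \<Rightarrow> nat) \<Rightarrow> real) \<Rightarrow> (nat \<Rightarrow> nat) \<Rightarrow> real" where
  "iter_partial_coeffs [] b = b"
| "iter_partial_coeffs (k # ks) b = partial_coeffs k (iter_partial_coeffs ks b)"

lemma power_series_on_polydisc_iter_partials: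
  "power_series_on_polydisc n b f \<Longrightarrow> set ks \<subseteq> {..<n} \<Longrightarrow>
     power_series_on_polydisc n (iter_partial_coeffs ks b) (iter_partials ks f)"
  by (induction ks) (auto intro: power_series_on_polydisc_partial_deriv)

lemma prod_fact_incr:
  fixes \<beta> :: "nat \<Rightarrow> nat"
  assumes "k < n"
  shows "(\<Prod>l<n. fact ((\<beta>(k := \<beta> k + 1)) l) :: real) = real (\<beta> k + 1) * (\<Prod>l<n. fact (\<beta> l))"
proof -
  have "(\<Prod>l<n. fact ((\<beta>(k := \<beta> k + 1)) l) :: real) =
        fact (\<beta> k + 1) * (\<Prod>l\<in>{..<n}-{k}. fact ((\<beta>(k := \<beta> k + 1)) l))"
    using assms by (subst prod.remove[of _ k]) auto
  moreover have "(\<Prod>l\<in>{..<n}-{k}. fact ((\<beta>(k := \<beta> k + 1)) l) :: real) =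
                 (\<Prod>l\<in>{..<n}-{k}. fact (\<beta> l))"
    by (intro prod.cong) auto
  moreover have "(\<Prod>l<n. fact (\<beta> l) :: real) = fact (\<beta> k) * (\<Prod>l\<in>{..<n}-{k}. fact (\<beta> l))"
    using assms by (subst prod.remove[of _ k]) auto
  ultimately show ?thesis by simp
qed

text \<open>Each derivative in direction \<open>k\<close> shifts the coefficients by one in coordinate \<open>k\<close>
  and multiplies them by the new exponent; the factorial weights absorb these factors.\<close>
lemma iter_partial_coeffs_prod_fact:
  "set ks \<subseteq> {..<n} \<Longrightarrow>
   iter_partial_coeffs ks b \<beta> * (\<Prod>l<n. fact (\<beta> l)) =
     b (\<lambda>l. \<beta> l + count_list ks l) * (\<Prod>l<n. fact (\<beta> l + count_list ks l))"
proof (induction ks arbitrary: \<beta>)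
  case (Cons k ks)
  hence "k < n" and ks: "set ks \<subseteq> {..<n}" by auto
  define \<beta>' where "\<beta>' = \<beta>(k := \<beta> k + 1)"
  have shift: "\<beta>' l + count_list ks l = \<beta> l + count_list (k # ks) l" for l
    by (simp add: \<beta>'_def)
  have "iter_partial_coeffs (k # ks) b \<beta> * (\<Prod>l<n. fact (\<beta> l))
        = iter_partial_coeffs ks b \<beta>' * (\<Prod>l<n. fact (\<beta>' l))"
    using prod_fact_incr[OF \<open>k < n\<close>, of \<beta>] by (simp add: partial_coeffs_def \<beta>'_def)
  also have "\<dots> = b (\<lambda>l. \<beta>' l + count_list ks l) * (\<Prod>l<n. fact (\<beta>' l + count_list ks l))"
    by (rule Cons.IH[OF ks])
  finally show ?case by (simp only: shift)
qed simp

lemma monomial_at_zero: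
  "\<alpha> \<in> multi_indices n \<Longrightarrow> monomial n \<alpha> (\<lambda>_. 0) = (if \<alpha> = (\<lambda>_. 0) then 1 else 0)"
  unfolding monomial_def multi_indices_def
  apply (auto simp: fun_eq_iff zero_power)
  subgoal for l by (cases "l < n") auto
  done

lemma power_series_on_polydisc_at_zero:
  assumes "power_series_on_polydisc n b f"
  shows "f (\<lambda>_. 0) = b (\<lambda>_. 0)"
proof -
  have "((\<lambda>\<alpha>. b \<alpha> * monomial n \<alpha> (\<lambda>_. 0)) has_sum f (\<lambda>_. 0)) (multi_indices n)"
    using assms unfolding power_series_on_polydisc_def by auto
  also have "?this \<longleftrightarrow> ((\<lambda>\<alpha>. b \<alpha> * monomial n \<alpha> (\<lambda>_. 0)) has_sum f (\<lambda>_. 0)) {\<lambda>_. 0}"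
    by (rule has_sum_cong_neutral) (auto simp: monomial_at_zero multi_indices_def)
  finally have "((\<lambda>\<alpha>. b \<alpha> * monomial n \<alpha> (\<lambda>_. 0)) has_sum f (\<lambda>_. 0)) {\<lambda>_. 0}" .
  moreover have "((\<lambda>\<alpha>. b \<alpha> * monomial n \<alpha> (\<lambda>_. 0)) has_sum b (\<lambda>_. 0)) {\<lambda>_. 0}"
    using has_sum_finite[of "{\<lambda>_. 0}" "\<lambda>\<alpha>. b \<alpha> * monomial n \<alpha> (\<lambda>_. 0)"]
    by (simp add: monomial_def)
  ultimately show ?thesis by (rule has_sum_unique)
qed

lemma count_list_multi_index_list:
  "count_list (multi_index_list n \<alpha>) l = (if l < n then \<alpha> l else 0)"
proof (induction n)
  case (Suc n)
  have "count_list (replicate m k) l = (if k = l then m else 0)" for m k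
    by (induction m) auto
  with Suc show ?case by (auto simp: multi_index_list_def)
qed (simp add: multi_index_list_def)

lemma taylor_coeff_power_series_on_polydisc:
  assumes f: "power_series_on_polydisc n b f" and "\<alpha> \<in> multi_indices n"
  shows "taylor_coeff n f \<alpha> = b \<alpha>"
proof -
  define ks where "ks = multi_index_list n \<alpha>"
  have ks: "set ks \<subseteq> {..<n}" by (auto simp: ks_def multi_index_list_def)
  have counts: "count_list ks = \<alpha>"
    using \<open>\<alpha> \<in> multi_indices n\<close>
    by (auto simp: ks_def count_list_multi_index_list fun_eq_iff multi_indices_def)
  have "iter_partials ks f (\<lambda>_. 0) = iter_partial_coeffs ks b (\<lambda>_. 0) * (\<Prod>l<n. fact 0)"
    using power_series_on_polydisc_at_zero[OF power_series_on_polydisc_iter_partials[OF f ks]] by simp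
  also have "\<dots> = b \<alpha> * (\<Prod>l<n. fact (\<alpha> l))"
    using iter_partial_coeffs_prod_fact[OF ks, of b "\<lambda>_. 0"] by (simp add: counts)
  finally show ?thesis unfolding taylor_coeff_def ks_def by simp
qed

section \<open>Homogeneous polynomials on \<open>\<complex>\<^sup>n\<close>\<close>

definition cmonomial :: "nat \<Rightarrow> (nat \<Rightarrow> nat) \<Rightarrow> (nat \<Rightarrow> complex) \<Rightarrow> complex" where
  "cmonomial n \<alpha> v = (\<Prod>k<n. v k ^ \<alpha> k)"

inductive homogeneous_poly :: "nat \<Rightarrow> nat \<Rightarrow> ((nat \<Rightarrow> complex) \<Rightarrow> complex) \<Rightarrow> bool" for n where
  const: "homogeneous_poly n 0 (\<lambda>v. c)"
| zero: "homogeneous_poly n m (\<lambda>v. 0)"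
| var_mult: "homogeneous_poly n m f \<Longrightarrow> k < n \<Longrightarrow> homogeneous_poly n (Suc m) (\<lambda>v. v k * f v)"
| add: "homogeneous_poly n m f \<Longrightarrow> homogeneous_poly n m g \<Longrightarrow> homogeneous_poly n m (\<lambda>v. f v + g v)"

lemma homogeneous_poly_cmult: "homogeneous_poly n m f \<Longrightarrow> homogeneous_poly n m (\<lambda>v. c * f v)"
proof (induction rule: homogeneous_poly.induct)
  case (const c')
  show ?case using homogeneous_poly.const[of n "c * c'"] by simp
next
  case (var_mult m f k)
  show ?case
    using homogeneous_poly.var_mult[OF var_mult.IH var_mult.hyps(2)] by (simp add: ac_simps)
next
  case (add m f g)
  show ?case
    using homogeneous_poly.add[OF add.IH] by (simp add: algebra_simps)
qed (simp add: homogeneous_poly.zero)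

lemma homogeneous_poly_mult:
  "homogeneous_poly n p f \<Longrightarrow> homogeneous_poly n q g \<Longrightarrow> homogeneous_poly n (p + q) (\<lambda>v. f v * g v)"
proof (induction rule: homogeneous_poly.induct)
  case (const c)
  thus ?case by (simp add: homogeneous_poly_cmult)
next
  case (var_mult m f k)
  show ?case
    using homogeneous_poly.var_mult[OF var_mult.IH[OF var_mult.prems] var_mult.hyps(2)]
    by (simp add: ac_simps)
next
  case (add m f1 f2)
  show ?case
    using homogeneous_poly.add[OF add.IH[OF add.prems]] by (simp add: algebra_simps)
qed (simp add: homogeneous_poly.zero)

lemma homogeneous_poly_sum:
  "finite I \<Longrightarrow> (\<And>i. i \<in> I \<Longrightarrow> homogeneous_poly n m (f i)) \<Longrightarrow>
     homogeneous_poly n m (\<lambda>v. \<Sum>i\<in>I. f i v)"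
  by (induction I rule: finite_induct) (auto intro: homogeneous_poly.zero homogeneous_poly.add)

lemma homogeneous_poly_power: "k < n \<Longrightarrow> homogeneous_poly n i (\<lambda>v. v k ^ i)"
  by (induction i) (auto intro: homogeneous_poly.var_mult homogeneous_poly.const[of n 1, simplified])

lemma cmonomial_incr:
  assumes "k < n"
  shows "cmonomial n (\<alpha>(k := \<alpha> k + 1)) v = v k * cmonomial n \<alpha> v"
proof -
  have "cmonomial n (\<alpha>(k := \<alpha> k + 1)) v = v k ^ (\<alpha> k + 1) * (\<Prod>l\<in>{..<n}-{k}. v l ^ \<alpha> l)"
    unfolding cmonomial_def using assms by (subst prod.remove[of _ k]) (auto intro!: prod.cong)
  also have "\<dots> = v k * cmonomial n \<alpha> v"
    unfolding cmonomial_def using assms by (subst (2) prod.remove[of _ k]) auto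
  finally show ?thesis .
qed

lemma sum_multi_indices_of_degree_incr:
  assumes "k < n"
  shows "(\<Sum>\<alpha>\<in>multi_indices_of_degree n m. g (\<alpha>(k := \<alpha> k + 1))) =
         (\<Sum>\<beta>\<in>multi_indices_of_degree n (Suc m). if 0 < \<beta> k then g \<beta> else 0)"
proof -
  have decr: "multi_degree n (\<beta>(k := \<beta> k - 1)) = m"
    if "multi_degree n \<beta> = Suc m" "0 < \<beta> k" for \<beta>
    using that multi_degree_incr[OF assms, of "\<beta>(k := \<beta> k - 1)"] by (simp add: fun_upd_idem)
  have "(\<Sum>\<alpha>\<in>multi_indices_of_degree n m. g (\<alpha>(k := \<alpha> k + 1))) =
        (\<Sum>\<beta>\<in>{\<beta>\<in>multi_indices_of_degree n (Suc m). 0 < \<beta> k}. g \<beta>)"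
    by (rule sum.reindex_bij_witness[where i="\<lambda>\<beta>. \<beta>(k := \<beta> k - 1)" and j="\<lambda>\<alpha>. \<alpha>(k := \<alpha> k + 1)"])
       (use assms in \<open>auto simp: multi_indices_of_degree_def multi_indices_def
          multi_degree_incr[OF assms, simplified] decr[simplified]\<close>)
  also have "\<dots> = (\<Sum>\<beta>\<in>multi_indices_of_degree n (Suc m). if 0 < \<beta> k then g \<beta> else 0)"
    by (rule sum.inter_filter[OF finite_multi_indices_of_degree])
  finally show ?thesis .
qed

lemma homogeneous_poly_expansion:
  "homogeneous_poly n m f \<Longrightarrow>
     \<exists>a. \<forall>v. f v = (\<Sum>\<alpha>\<in>multi_indices_of_degree n m. a \<alpha> * cmonomial n \<alpha> v)"
proof (induction rule: homogeneous_poly.induct)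
  case (const c)
  show ?case by (intro exI[of _ "\<lambda>_. c"]) (simp add: multi_indices_of_degree_0 cmonomial_def)
next
  case (zero m)
  show ?case by (intro exI[of _ "\<lambda>_. 0"]) simp
next
  case (var_mult m f k)
  then obtain a where a: "\<And>v. f v = (\<Sum>\<alpha>\<in>multi_indices_of_degree n m. a \<alpha> * cmonomial n \<alpha> v)"
    by blast
  define a' where "a' \<beta> = (if 0 < \<beta> k then a (\<beta>(k := \<beta> k - 1)) else 0)" for \<beta>
  have "v k * f v = (\<Sum>\<beta>\<in>multi_indices_of_degree n (Suc m). a' \<beta> * cmonomial n \<beta> v)" for v
  proof -
    have "v k * f v = (\<Sum>\<alpha>\<in>multi_indices_of_degree n m.
            (\<lambda>\<beta>. a (\<beta>(k := \<beta> k - 1)) * cmonomial n \<beta> v) (\<alpha>(k := \<alpha> k + 1)))"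
      by (simp add: a sum_distrib_left cmonomial_incr[OF var_mult.hyps(2), simplified] ac_simps)
    also have "\<dots> = (\<Sum>\<beta>\<in>multi_indices_of_degree n (Suc m).
                        if 0 < \<beta> k then a (\<beta>(k := \<beta> k - 1)) * cmonomial n \<beta> v else 0)"
      by (rule sum_multi_indices_of_degree_incr[OF var_mult.hyps(2),
            where g="\<lambda>\<beta>. a (\<beta>(k := \<beta> k - 1)) * cmonomial n \<beta> v"])
    also have "\<dots> = (\<Sum>\<beta>\<in>multi_indices_of_degree n (Suc m). a' \<beta> * cmonomial n \<beta> v)"
      by (intro sum.cong) (auto simp: a'_def)
    finally show ?thesis .
  qed
  thus ?case by blast
next
  case (add m f g)
  then obtain a b where
    "\<And>v. f v = (\<Sum>\<alpha>\<in>multi_indices_of_degree n m. a \<alpha> * cmonomial n \<alpha> v)"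
    "\<And>v. g v = (\<Sum>\<alpha>\<in>multi_indices_of_degree n m. b \<alpha> * cmonomial n \<alpha> v)" by blast
  thus ?case
    by (intro exI[of _ "\<lambda>\<alpha>. a \<alpha> + b \<alpha>"]) (simp add: algebra_simps sum.distrib)
qed

lemma sum_powers_root_of_unity:
  fixes N p q :: nat
  assumes "p < N" "q < N"
  shows "(\<Sum>i<N. (cis (2 * pi / N) ^ i) ^ p * cnj (cis (2 * pi / N) ^ i) ^ q) =
         (if p = q then of_nat N else 0)"
proof -
  define u where "u = cis (2 * pi * (real p - real q) / N)"
  have "(cis (2 * pi / N) ^ i) ^ p * cnj (cis (2 * pi / N) ^ i) ^ q = u ^ i" for i
    by (simp add: u_def Complex.DeMoivre cis_cnj cis_mult algebra_simps diff_divide_distrib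
             flip: power_mult complex_cnj_power)
  hence sum_u: "(\<Sum>i<N. (cis (2 * pi / N) ^ i) ^ p * cnj (cis (2 * pi / N) ^ i) ^ q) = (\<Sum>i<N. u ^ i)"
    by simp
  show ?thesis
  proof (cases "p = q")
    case True
    show ?thesis unfolding sum_u using True by (simp add: u_def)
  next
    case False
    have "u \<noteq> 1"
    proof
      assume "u = 1"
      then obtain m :: int where "2 * pi * (real p - real q) / N = 2 * pi * m"
        unfolding u_def cis_eq_1_iff by (auto simp: ac_simps)
      hence "2 * pi * ((real p - real q) / N) = 2 * pi * m" by simp
      hence "(real p - real q) / N = m" using pi_gt_zero by (simp only: mult_cancel_left) simp
      hence "real p - real q = real N * m" using assms by (simp add: field_simps)
      hence "real_of_int (int p - int q) = real_of_int (int N * m)" by simp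
      hence e: "int p - int q = int N * m" by (simp only: of_int_eq_iff)
      with False have "m \<noteq> 0" by auto
      hence "int N * 1 \<le> int N * \<bar>m\<bar>" by (intro mult_left_mono) auto
      hence "int N \<le> \<bar>int N * m\<bar>" by (simp add: abs_mult)
      thus False using e assms by linarith
    qed
    moreover have "u ^ N = 1"
    proof -
      have "u ^ N = cis (2 * pi * (real p - real q))"
        using assms by (simp add: u_def Complex.DeMoivre)
      thus ?thesis by (simp add: cis_multiple_2pi)
    qed
    ultimately show ?thesis
      unfolding sum_u using False by (simp add: sum_gp_strict)
  qed
qed

definition torus_coeff :: "nat \<Rightarrow> nat \<Rightarrow> ((nat \<Rightarrow> complex) \<Rightarrow> complex) \<Rightarrow> (nat \<Rightarrow> nat) \<Rightarrow> complex" where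
  "torus_coeff n N f \<alpha> =
     (\<Sum>e\<in>{..<n} \<rightarrow>\<^sub>E {..<N}.
        f (\<lambda>k. cis (2 * pi / N) ^ e k) * (\<Prod>k<n. cnj (cis (2 * pi / N) ^ e k) ^ \<alpha> k)) / of_nat N ^ n"

lemma torus_coeff_cmonomial:
  assumes "\<alpha> \<in> multi_indices n" "\<beta> \<in> multi_indices n" "\<And>k. k < n \<Longrightarrow> \<alpha> k < N \<and> \<beta> k < N"
  shows "torus_coeff n N (cmonomial n \<beta>) \<alpha> = (if \<beta> = \<alpha> then 1 else 0)"
proof -
  define \<omega> where "\<omega> = cis (2 * pi / N)"
  have "N > 0" if "n > 0" using assms(3)[of 0] that by auto
  have "(\<Sum>e\<in>{..<n} \<rightarrow>\<^sub>E {..<N}. cmonomial n \<beta> (\<lambda>k. \<omega> ^ e k) * (\<Prod>k<n. cnj (\<omega> ^ e k) ^ \<alpha> k))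
        = (\<Sum>e\<in>{..<n} \<rightarrow>\<^sub>E {..<N}. \<Prod>k<n. (\<omega> ^ e k) ^ \<beta> k * cnj (\<omega> ^ e k) ^ \<alpha> k)"
    by (simp add: cmonomial_def prod.distrib)
  also have "\<dots> = (\<Prod>k<n. \<Sum>i<N. (\<omega> ^ i) ^ \<beta> k * cnj (\<omega> ^ i) ^ \<alpha> k)"
    by (rule prod_sum_PiE[symmetric]) auto
  also have "\<dots> = (\<Prod>k<n. if \<beta> k = \<alpha> k then of_nat N else 0)"
    unfolding \<omega>_def using assms(3) by (intro prod.cong refl sum_powers_root_of_unity) auto
  also have "\<dots> = (if \<beta> = \<alpha> then of_nat N ^ n else 0)"
  proof (cases "\<beta> = \<alpha>")
    case False
    then obtain k where "\<beta> k \<noteq> \<alpha> k" by auto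
    moreover from this have "k < n" using assms(1,2) unfolding multi_indices_def by (cases "k < n") auto
    ultimately show ?thesis using False by (intro trans[OF prod_zero]) (auto intro!: bexI[of _ k])
  qed simp
  finally show ?thesis
    using \<open>n > 0 \<Longrightarrow> N > 0\<close> by (cases "n = 0") (auto simp: torus_coeff_def \<omega>_def)
qed

lemma torus_coeff_sum:
  assumes "finite A"
  shows "torus_coeff n N (\<lambda>v. \<Sum>\<beta>\<in>A. a \<beta> * g \<beta> v) \<alpha> = (\<Sum>\<beta>\<in>A. a \<beta> * torus_coeff n N (g \<beta>) \<alpha>)"
  unfolding torus_coeff_def
  by (simp add: sum_distrib_left sum_distrib_right sum_divide_distrib mult.assoc sum.swap[of _ A])

lemma torus_coeff_expansion:
  assumes f: "\<And>v. f v = (\<Sum>\<beta>\<in>multi_indices_of_degree n m. a \<beta> * cmonomial n \<beta> v)"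
    and "m < N" and \<alpha>: "\<alpha> \<in> multi_indices_of_degree n m"
  shows "torus_coeff n N f \<alpha> = a \<alpha>"
proof -
  have small: "\<beta> k < N" if "\<beta> \<in> multi_indices_of_degree n m" "k < n" for \<beta> k
    using component_le_multi_degree[OF \<open>k < n\<close>, of \<beta>] that \<open>m < N\<close>
    by (auto simp: multi_indices_of_degree_def)
  have "torus_coeff n N f \<alpha> =
        (\<Sum>\<beta>\<in>multi_indices_of_degree n m. a \<beta> * torus_coeff n N (cmonomial n \<beta>) \<alpha>)"
    unfolding f[abs_def] by (rule torus_coeff_sum[OF finite_multi_indices_of_degree])
  also have "\<dots> = (\<Sum>\<beta>\<in>multi_indices_of_degree n m. if \<beta> = \<alpha> then a \<beta> else 0)"
    using \<alpha> small by (intro sum.cong refl)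
      (auto simp: torus_coeff_cmonomial multi_indices_of_degree_def)
  also have "\<dots> = a \<alpha>" using \<alpha> finite_multi_indices_of_degree by simp
  finally show ?thesis .
qed

lemma norm_torus_coeff_le:
  assumes "\<And>v. (\<forall>k<n. norm (v k) = 1) \<Longrightarrow> norm (f v) \<le> B" "N > 0"
  shows "norm (torus_coeff n N f \<alpha>) \<le> B"
proof -
  have "norm (\<Sum>e\<in>{..<n} \<rightarrow>\<^sub>E {..<N}.
          f (\<lambda>k. cis (2 * pi / N) ^ e k) * (\<Prod>k<n. cnj (cis (2 * pi / N) ^ e k) ^ \<alpha> k))
        \<le> (\<Sum>e\<in>{..<n} \<rightarrow>\<^sub>E {..<N}. B)"
    by (intro sum_norm_le)
       (simp add: norm_mult prod_norm[symmetric] norm_power assms(1))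
  also have "\<dots> = real N ^ n * B" by (simp add: card_PiE)
  finally show ?thesis
    using \<open>N > 0\<close> by (simp add: torus_coeff_def norm_divide norm_power field_simps)
qed

lemma homogeneous_poly_torus_expansion:
  assumes "homogeneous_poly n m f"
  shows "f v = (\<Sum>\<alpha>\<in>multi_indices_of_degree n m. torus_coeff n (Suc m) f \<alpha> * cmonomial n \<alpha> v)"
proof -
  obtain a where a: "\<And>v. f v = (\<Sum>\<alpha>\<in>multi_indices_of_degree n m. a \<alpha> * cmonomial n \<alpha> v)"
    using homogeneous_poly_expansion[OF assms] by blast
  have "f v = (\<Sum>\<alpha>\<in>multi_indices_of_degree n m. a \<alpha> * cmonomial n \<alpha> v)" by (rule a)
  also have "\<dots> = (\<Sum>\<alpha>\<in>multi_indices_of_degree n m. torus_coeff n (Suc m) f \<alpha> * cmonomial n \<alpha> v)"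
    by (intro sum.cong refl) (simp add: torus_coeff_expansion[OF a])
  finally show ?thesis .
qed

section \<open>The function along complex lines\<close>

definition exp_mixture :: "nat \<Rightarrow> (nat \<Rightarrow> real) \<Rightarrow> (nat \<Rightarrow> complex) \<Rightarrow> complex \<Rightarrow> complex" where
  "exp_mixture n \<xi> v t = (\<Sum>k<n. of_real (\<xi> k) * exp (t * v k))"

definition phi_line :: "nat \<Rightarrow> nat \<Rightarrow> (nat \<Rightarrow> real) \<Rightarrow> (nat \<Rightarrow> complex) \<Rightarrow> complex \<Rightarrow> complex" where
  "phi_line n j \<xi> v t = exp (t * v j) * inverse (exp_mixture n \<xi> v t)"

definition inverse_mixture_deriv :: "nat \<Rightarrow> (nat \<Rightarrow> real) \<Rightarrow> (nat \<Rightarrow> complex) \<Rightarrow> nat \<Rightarrow> complex" where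
  "inverse_mixture_deriv n \<xi> v m = (deriv ^^ m) (\<lambda>t. inverse (exp_mixture n \<xi> v t)) 0"

lemma higher_deriv_exp_linear:
  "(deriv ^^ i) (\<lambda>t. exp (t * c)) = (\<lambda>t. c ^ i * exp (t * c :: complex))"
proof (induction i)
  case (Suc i)
  have "deriv (\<lambda>t. c ^ i * exp (t * c)) = (\<lambda>t. c ^ Suc i * exp (t * c))"
    by (rule ext, rule DERIV_imp_deriv) (auto intro!: derivative_eq_intros)
  with Suc show ?case by simp
qed simp

lemma higher_deriv_exp_mixture:
  "(deriv ^^ i) (exp_mixture n \<xi> v) = (\<lambda>t. \<Sum>k<n. of_real (\<xi> k) * v k ^ i * exp (t * v k))"
proof (induction i)
  case 0
  show ?case by (simp add: exp_mixture_def fun_eq_iff)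
next
  case (Suc i)
  have "deriv (\<lambda>t. \<Sum>k<n. of_real (\<xi> k) * v k ^ i * exp (t * v k)) =
        (\<lambda>t. \<Sum>k<n. of_real (\<xi> k) * v k ^ Suc i * exp (t * v k))"
    by (rule ext, rule DERIV_imp_deriv) (auto intro!: derivative_eq_intros sum.cong simp: algebra_simps)
  with Suc show ?case by simp
qed

lemma holomorphic_exp_mixture: "exp_mixture n \<xi> v holomorphic_on A"
  unfolding exp_mixture_def by (intro holomorphic_intros)

lemma open_exp_mixture_nonzero: "open {t. exp_mixture n \<xi> v t \<noteq> 0}"
  by (intro open_Collect_neq holomorphic_on_imp_continuous_on holomorphic_exp_mixture
        continuous_on_const)

lemma holomorphic_inverse_exp_mixture:
  "(\<lambda>t. inverse (exp_mixture n \<xi> v t)) holomorphic_on {t. exp_mixture n \<xi> v t \<noteq> 0}"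
  by (intro holomorphic_intros holomorphic_exp_mixture) auto

lemma holomorphic_phi_line: "phi_line n j \<xi> v holomorphic_on {t. exp_mixture n \<xi> v t \<noteq> 0}"
  unfolding phi_line_def[abs_def]
  by (intro holomorphic_on_mult holomorphic_inverse_exp_mixture) (intro holomorphic_intros)

context
  fixes n :: nat and \<xi> :: "nat \<Rightarrow> real"
  assumes sum_weights: "(\<Sum>k<n. \<xi> k) = 1"
begin

lemma exp_mixture_at_0: "exp_mixture n \<xi> v 0 = 1"
  using sum_weights by (simp add: exp_mixture_def flip: of_real_sum)

text \<open>Leibniz rule applied to \<open>S * inverse S = 1\<close> for \<open>S = exp_mixture n \<xi> v\<close>, whose
  \<open>i\<close>-th derivative at \<open>0\<close> is the weighted power sum of the \<open>v k\<close>.\<close>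
lemma inverse_mixture_deriv_rec:
  assumes "m > 0"
  shows "inverse_mixture_deriv n \<xi> v m =
           - (\<Sum>i\<in>{1..m}. of_nat (m choose i) * (\<Sum>k<n. of_real (\<xi> k) * v k ^ i) *
                            inverse_mixture_deriv n \<xi> v (m - i))"
proof -
  let ?U = "{t. exp_mixture n \<xi> v t \<noteq> 0}"
  have "0 \<in> ?U" by (simp add: exp_mixture_at_0)
  have "eventually (\<lambda>t. exp_mixture n \<xi> v t * inverse (exp_mixture n \<xi> v t) = 1) (nhds 0)"
    using eventually_nhds_in_open[OF open_exp_mixture_nonzero \<open>0 \<in> ?U\<close>]
    by (rule eventually_mono) auto
  hence "(deriv ^^ m) (\<lambda>t. exp_mixture n \<xi> v t * inverse (exp_mixture n \<xi> v t)) 0 =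
         (deriv ^^ m) (\<lambda>t. 1) 0"
    by (rule higher_deriv_cong_ev) simp
  also have "\<dots> = 0" using assms by simp
  finally have "(deriv ^^ m) (\<lambda>t. exp_mixture n \<xi> v t * inverse (exp_mixture n \<xi> v t)) 0 = 0" .
  moreover have "(deriv ^^ m) (\<lambda>t. exp_mixture n \<xi> v t * inverse (exp_mixture n \<xi> v t)) 0 =
        (\<Sum>i = 0..m. of_nat (m choose i) * (deriv ^^ i) (exp_mixture n \<xi> v) 0 *
                      inverse_mixture_deriv n \<xi> v (m - i))"
    unfolding inverse_mixture_deriv_def
    by (rule higher_deriv_mult[OF holomorphic_exp_mixture holomorphic_inverse_exp_mixture
          open_exp_mixture_nonzero \<open>0 \<in> ?U\<close>])
  moreover have "\<dots> = inverse_mixture_deriv n \<xi> v m +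
        (\<Sum>i\<in>{1..m}. of_nat (m choose i) * (\<Sum>k<n. of_real (\<xi> k) * v k ^ i) *
                      inverse_mixture_deriv n \<xi> v (m - i))"
    by (subst sum.atLeast_Suc_atMost)
       (auto simp: higher_deriv_exp_mixture exp_mixture_at_0)
  ultimately show ?thesis by (simp add: add_eq_0_iff)
qed

lemma homogeneous_poly_inverse_mixture_deriv:
  "homogeneous_poly n m (\<lambda>v. inverse_mixture_deriv n \<xi> v m)"
proof (induction m rule: less_induct)
  case (less m)
  show ?case
  proof (cases "m = 0")
    case True
    thus ?thesis
      using homogeneous_poly.const[of n 1]
      by (simp add: inverse_mixture_deriv_def exp_mixture_at_0)
  next
    case False
    have "homogeneous_poly n m (\<lambda>v. \<Sum>i\<in>{1..m}. of_nat (m choose i) *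
            ((\<Sum>k<n. of_real (\<xi> k) * v k ^ i) * inverse_mixture_deriv n \<xi> v (m - i)))"
    proof (intro homogeneous_poly_sum homogeneous_poly_cmult)
      fix i assume i: "i \<in> {1..m}"
      have "homogeneous_poly n (i + (m - i))
              (\<lambda>v. (\<Sum>k<n. of_real (\<xi> k) * v k ^ i) * inverse_mixture_deriv n \<xi> v (m - i))"
        using i by (intro homogeneous_poly_mult homogeneous_poly_sum homogeneous_poly_cmult
                      homogeneous_poly_power less) auto
      thus "homogeneous_poly n m
              (\<lambda>v. (\<Sum>k<n. of_real (\<xi> k) * v k ^ i) * inverse_mixture_deriv n \<xi> v (m - i))"
        using i by simp
    qed simp
    from homogeneous_poly_cmult[OF this, of "-1"] show ?thesis
      using inverse_mixture_deriv_rec False by (simp add: mult.assoc)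
  qed
qed

lemma homogeneous_poly_phi_line_taylor:
  assumes "j < n"
  shows "homogeneous_poly n m (\<lambda>v. (deriv ^^ m) (phi_line n j \<xi> v) 0 / fact m)"
proof -
  have "(deriv ^^ m) (phi_line n j \<xi> v) 0 =
        (\<Sum>i = 0..m. of_nat (m choose i) * (v j ^ i * inverse_mixture_deriv n \<xi> v (m - i)))" for v
  proof -
    have "(deriv ^^ m) (phi_line n j \<xi> v) 0 =
          (\<Sum>i = 0..m. of_nat (m choose i) * (deriv ^^ i) (\<lambda>t. exp (t * v j)) 0 *
                        inverse_mixture_deriv n \<xi> v (m - i))"
      unfolding phi_line_def[abs_def] inverse_mixture_deriv_def
      by (rule higher_deriv_mult[OF _ holomorphic_inverse_exp_mixture open_exp_mixture_nonzero])
         (auto intro!: holomorphic_intros simp: exp_mixture_at_0)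
    thus ?thesis by (simp add: higher_deriv_exp_linear mult.assoc)
  qed
  moreover have "homogeneous_poly n m
    (\<lambda>v. inverse (fact m) * (\<Sum>i = 0..m. of_nat (m choose i) *
                                 (v j ^ i * inverse_mixture_deriv n \<xi> v (m - i))))"
  proof (intro homogeneous_poly_cmult homogeneous_poly_sum)
    fix i assume "i \<in> {0..m}"
    hence "homogeneous_poly n (i + (m - i)) (\<lambda>v. v j ^ i * inverse_mixture_deriv n \<xi> v (m - i))"
      by (intro homogeneous_poly_mult homogeneous_poly_power homogeneous_poly_inverse_mixture_deriv
            assms)
    thus "homogeneous_poly n m (\<lambda>v. v j ^ i * inverse_mixture_deriv n \<xi> v (m - i))"
      using \<open>i \<in> {0..m}\<close> by simp
  qed simp
  ultimately show ?thesis by (simp add: divide_inverse ac_simps)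
qed

end

section \<open>The expansion of \<open>\<phi>\<close>\<close>

definition phi_coeff :: "nat \<Rightarrow> nat \<Rightarrow> (nat \<Rightarrow> real) \<Rightarrow> (nat \<Rightarrow> nat) \<Rightarrow> real" where
  "phi_coeff n j \<xi> \<alpha> =
     (let m = multi_degree n \<alpha>
      in Re (torus_coeff n (Suc m) (\<lambda>v. (deriv ^^ m) (phi_line n j \<xi> v) 0 / fact m) \<alpha>))"

definition phi_bound :: real where
  "phi_bound = exp (3/2) / (exp (-3/2) * cos (3/2))"

lemma cos_3_halves_pos: "cos (3/2 :: real) > 0"
  using pi_gt3 by (intro cos_gt_zero) auto

lemma phi_bound_pos: "phi_bound > 0"
  using cos_3_halves_pos by (simp add: phi_bound_def)

context
  fixes n j :: nat and \<xi> :: "nat \<Rightarrow> real"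
  assumes nonneg: "\<And>k. k < n \<Longrightarrow> \<xi> k \<ge> 0"
    and sum1: "(\<Sum>k<n. \<xi> k) = 1"
    and j: "j < n"
begin

lemma Re_exp_mixture_ge:
  assumes v: "\<forall>k<n. norm (v k) \<le> 1" and t: "norm t \<le> 3/2"
  shows "exp (-3/2) * cos (3/2) \<le> Re (exp_mixture n \<xi> v t)"
proof -
  have summand: "\<xi> k * (exp (-3/2) * cos (3/2)) \<le> Re (of_real (\<xi> k) * exp (t * v k))"
    if "k < n" for k
  proof -
    define z where "z = t * v k"
    have nz: "norm z \<le> 3/2"
      using mult_mono[OF t v[rule_format, OF that]] by (simp add: z_def norm_mult)
    have "exp (-3/2) \<le> exp (Re z)" using abs_Re_le_cmod[of z] nz by simp
    moreover have "cos (3/2) \<le> cos \<bar>Im z\<bar>"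
      using abs_Im_le_cmod[of z] nz pi_gt3 by (intro cos_monotone_0_pi_le) auto
    ultimately have "exp (-3/2) * cos (3/2) \<le> exp (Re z) * cos (Im z)"
      using cos_3_halves_pos by (intro mult_mono) auto
    hence "\<xi> k * (exp (-3/2) * cos (3/2)) \<le> \<xi> k * (exp (Re z) * cos (Im z))"
      using nonneg[OF that] by (rule mult_left_mono)
    thus ?thesis by (simp add: z_def Re_exp)
  qed
  have "exp (-3/2) * cos (3/2) = (\<Sum>k<n. \<xi> k * (exp (-3/2) * cos (3/2)))"
    by (simp add: sum1 flip: sum_distrib_right)
  also have "\<dots> \<le> (\<Sum>k<n. Re (of_real (\<xi> k) * exp (t * v k)))"
    by (intro sum_mono summand) auto
  also have "\<dots> = Re (exp_mixture n \<xi> v t)" by (simp add: exp_mixture_def)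
  finally show ?thesis .
qed

lemma phi_line_bounded:
  assumes v: "\<forall>k<n. norm (v k) \<le> 1" and t: "norm t \<le> 3/2"
  shows "exp_mixture n \<xi> v t \<noteq> 0" "norm (phi_line n j \<xi> v t) \<le> phi_bound"
proof -
  define c where "c = exp (-3/2) * cos (3/2::real)"
  have "c > 0" using cos_3_halves_pos by (simp add: c_def)
  have S: "c \<le> norm (exp_mixture n \<xi> v t)"
    using Re_exp_mixture_ge[OF v t] complex_Re_le_cmod[of "exp_mixture n \<xi> v t"]
    unfolding c_def by linarith
  thus "exp_mixture n \<xi> v t \<noteq> 0" using \<open>c > 0\<close> by auto
  have "norm (t * v j) \<le> 3/2" using mult_mono[OF t v[rule_format, OF j]] by (simp add: norm_mult)
  hence "Re (t * v j) \<le> 3/2" using complex_Re_le_cmod[of "t * v j"] by linarith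
  hence "norm (exp (t * v j)) \<le> exp (3/2)" by (simp only: norm_exp_eq_Re exp_le_cancel_iff)
  moreover have "norm (inverse (exp_mixture n \<xi> v t)) \<le> inverse c"
    unfolding norm_inverse by (rule le_imp_inverse_le[OF S \<open>c > 0\<close>])
  ultimately have "norm (phi_line n j \<xi> v t) \<le> exp (3/2) * inverse c"
    unfolding phi_line_def norm_mult by (intro mult_mono) auto
  thus "norm (phi_line n j \<xi> v t) \<le> phi_bound" by (simp only: phi_bound_def c_def divide_inverse)
qed

lemma cball_subset_exp_mixture_nonzero:
  "\<forall>k<n. norm (v k) \<le> 1 \<Longrightarrow> cball 0 (3/2) \<subseteq> {t. exp_mixture n \<xi> v t \<noteq> 0}"
  using phi_line_bounded(1) by auto

lemma norm_phi_line_taylor_le: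
  assumes v: "\<forall>k<n. norm (v k) \<le> 1"
  shows "norm ((deriv ^^ m) (phi_line n j \<xi> v) 0 / fact m) \<le> phi_bound / (3/2) ^ m"
proof -
  have "norm ((deriv ^^ m) (phi_line n j \<xi> v) 0) \<le> fact m * phi_bound / (3/2) ^ m"
  proof (rule Cauchy_inequality)
    show "phi_line n j \<xi> v holomorphic_on ball 0 (3/2)"
      by (rule holomorphic_on_subset[OF holomorphic_phi_line])
         (rule order_trans[OF ball_subset_cball cball_subset_exp_mixture_nonzero[OF v]])
    show "continuous_on (cball 0 (3/2)) (phi_line n j \<xi> v)"
      using holomorphic_on_imp_continuous_on[OF holomorphic_phi_line]
        cball_subset_exp_mixture_nonzero[OF v]
      by (rule continuous_on_subset)
    show "norm (phi_line n j \<xi> v t) \<le> phi_bound" if "norm (0 - t) = 3/2" for t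
      using phi_line_bounded(2)[OF v] that by simp
  qed simp
  hence "norm ((deriv ^^ m) (phi_line n j \<xi> v) 0) / fact m \<le> (fact m * phi_bound / (3/2) ^ m) / fact m"
    by (rule divide_right_mono) auto
  thus ?thesis by (simp add: norm_divide)
qed

lemma phi_line_taylor_sums:
  assumes v: "\<forall>k<n. norm (v k) \<le> 1"
  shows "(\<lambda>m. (deriv ^^ m) (phi_line n j \<xi> v) 0 / fact m) sums phi_line n j \<xi> v 1"
proof -
  have "phi_line n j \<xi> v holomorphic_on ball 0 (3/2)"
    by (rule holomorphic_on_subset[OF holomorphic_phi_line])
       (rule order_trans[OF ball_subset_cball cball_subset_exp_mixture_nonzero[OF v]])
  from holomorphic_power_series[OF this, of 1] show ?thesis by simp
qed

lemma abs_phi_coeff_le: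
  "\<bar>phi_coeff n j \<xi> \<alpha>\<bar> \<le> phi_bound * (2/3) ^ multi_degree n \<alpha>"
proof -
  let ?m = "multi_degree n \<alpha>"
  have "\<bar>phi_coeff n j \<xi> \<alpha>\<bar> \<le>
        norm (torus_coeff n (Suc ?m) (\<lambda>v. (deriv ^^ ?m) (phi_line n j \<xi> v) 0 / fact ?m) \<alpha>)"
    unfolding phi_coeff_def Let_def by (rule abs_Re_le_cmod)
  also have "\<dots> \<le> phi_bound / (3/2) ^ ?m"
    by (rule norm_torus_coeff_le) (auto intro: norm_phi_line_taylor_le)
  also have "\<dots> = phi_bound * (2/3) ^ ?m" by (simp add: power_divide field_simps)
  finally show ?thesis .
qed

lemma cmonomial_of_real: "cmonomial n \<alpha> (\<lambda>k. of_real (x k)) = of_real (monomial n \<alpha> x)"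
  by (simp add: cmonomial_def monomial_def)

lemma phi_taylor_homogeneous_part:
  assumes x: "\<forall>k<n. \<bar>x k\<bar> \<le> 1"
  shows "Re ((deriv ^^ m) (phi_line n j \<xi> (\<lambda>k. of_real (x k))) 0 / fact m) =
           (\<Sum>\<alpha>\<in>multi_indices_of_degree n m. phi_coeff n j \<xi> \<alpha> * monomial n \<alpha> x)"
proof -
  have "(deriv ^^ m) (phi_line n j \<xi> (\<lambda>k. of_real (x k))) 0 / fact m =
        (\<Sum>\<alpha>\<in>multi_indices_of_degree n m.
           torus_coeff n (Suc m) (\<lambda>v. (deriv ^^ m) (phi_line n j \<xi> v) 0 / fact m) \<alpha> *
           cmonomial n \<alpha> (\<lambda>k. of_real (x k)))"
    by (rule homogeneous_poly_torus_expansion[OF homogeneous_poly_phi_line_taylor[OF sum1 j]])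
  also have "\<dots> = (\<Sum>\<alpha>\<in>multi_indices_of_degree n m.
           torus_coeff n (Suc m) (\<lambda>v. (deriv ^^ m) (phi_line n j \<xi> v) 0 / fact m) \<alpha> *
           of_real (monomial n \<alpha> x))"
    by (simp only: cmonomial_of_real)
  finally have "Re ((deriv ^^ m) (phi_line n j \<xi> (\<lambda>k. of_real (x k))) 0 / fact m) =
        Re (\<Sum>\<alpha>\<in>multi_indices_of_degree n m.
           torus_coeff n (Suc m) (\<lambda>v. (deriv ^^ m) (phi_line n j \<xi> v) 0 / fact m) \<alpha> *
           of_real (monomial n \<alpha> x))"
    by (rule arg_cong)
  also have "\<dots> = (\<Sum>\<alpha>\<in>multi_indices_of_degree n m. phi_coeff n j \<xi> \<alpha> * monomial n \<alpha> x)"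
    unfolding Re_sum
    by (intro sum.cong refl) (simp add: phi_coeff_def multi_indices_of_degree_def Let_def)
  finally show ?thesis .
qed

lemma phi_has_sum:
  assumes x: "\<forall>k<n. \<bar>x k\<bar> \<le> 1"
  shows "((\<lambda>\<alpha>. phi_coeff n j \<xi> \<alpha> * monomial n \<alpha> x) has_sum
           exp (x j) / (\<Sum>k<n. \<xi> k * exp (x k))) (multi_indices n)"
proof -
  define F where "F = (\<lambda>\<alpha>. phi_coeff n j \<xi> \<alpha> * monomial n \<alpha> x)"
  define v where "v = (\<lambda>k. complex_of_real (x k))"
  have "\<forall>k<n. norm (v k) \<le> 1" using x by (simp add: v_def)
  hence "(\<lambda>m. Re ((deriv ^^ m) (phi_line n j \<xi> v) 0 / fact m)) sums Re (phi_line n j \<xi> v 1)"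
    by (intro sums_Re phi_line_taylor_sums)
  moreover have "phi_line n j \<xi> v 1 = of_real (exp (x j) / (\<Sum>k<n. \<xi> k * exp (x k)))"
    by (simp add: phi_line_def exp_mixture_def v_def exp_of_real divide_inverse
          flip: of_real_inverse of_real_mult of_real_sum)
  ultimately have taylor:
    "(\<lambda>m. \<Sum>\<alpha>\<in>multi_indices_of_degree n m. F \<alpha>) sums (exp (x j) / (\<Sum>k<n. \<xi> k * exp (x k)))"
    unfolding F_def v_def phi_taylor_homogeneous_part[OF x] by simp
  have "(\<lambda>\<alpha>. \<bar>F \<alpha>\<bar>) summable_on multi_indices n"
  proof (rule summable_on_comparison_test)
    show "(\<lambda>\<alpha>. phi_bound * (2/3) ^ multi_degree n \<alpha>) summable_on multi_indices n"
      by (intro summable_on_cmult_right summable_on_power_multi_degree) auto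
    show "\<bar>F \<alpha>\<bar> \<le> phi_bound * (2/3) ^ multi_degree n \<alpha>" for \<alpha>
    proof -
      have "\<bar>F \<alpha>\<bar> \<le> phi_bound * (2/3) ^ multi_degree n \<alpha> * 1"
        unfolding F_def abs_mult using abs_phi_coeff_le[of \<alpha>] abs_monomial_le[of n x 1 \<alpha>] x
        by (intro mult_mono) auto
      thus ?thesis by simp
    qed
  qed simp
  hence F: "F summable_on multi_indices n"
    using summable_on_iff_abs_summable_on_real[of F] by simp
  hence "(\<lambda>m. \<Sum>\<alpha>\<in>multi_indices_of_degree n m. F \<alpha>) sums infsum F (multi_indices n)"
    using has_sum_infsum_fibres[OF F, of "multi_degree n"]
    by (intro has_sum_imp_sums) (simp add: finite_multi_indices_of_degree
                                    flip: multi_indices_of_degree_def)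
  hence "infsum F (multi_indices n) = exp (x j) / (\<Sum>k<n. \<xi> k * exp (x k))"
    using taylor sums_unique2 by blast
  with has_sum_infsum[OF F] show ?thesis by (simp add: F_def)
qed

lemma power_series_on_polydisc_phi:
  "power_series_on_polydisc n (phi_coeff n j \<xi>) (\<lambda>z. exp (z j) / (\<Sum>k<n. \<xi> k * exp (z k)))"
  unfolding power_series_on_polydisc_def coeffs_radius_ge_1_def
proof (intro conjI allI impI)
  show "((\<lambda>\<alpha>. phi_coeff n j \<xi> \<alpha> * monomial n \<alpha> x) has_sum exp (x j) / (\<Sum>k<n. \<xi> k * exp (x k)))
          (multi_indices n)" if "\<forall>l<n. \<bar>x l\<bar> < 1" for x
    using that by (intro phi_has_sum) (simp add: less_imp_le)
  show "\<exists>C. \<forall>\<alpha>\<in>multi_indices n. \<bar>phi_coeff n j \<xi> \<alpha>\<bar> * r ^ multi_degree n \<alpha> \<le> C"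
    if "0 \<le> r \<and> r < 1" for r
  proof (intro exI ballI)
    fix \<alpha>
    have "\<bar>phi_coeff n j \<xi> \<alpha>\<bar> * r ^ multi_degree n \<alpha> \<le> phi_bound * (2/3) ^ multi_degree n \<alpha> * 1"
      using abs_phi_coeff_le that phi_bound_pos by (intro mult_mono power_le_one) auto
    also have "\<dots> \<le> phi_bound"
      using phi_bound_pos by (simp add: mult_left_le power_le_one)
    finally show "\<bar>phi_coeff n j \<xi> \<alpha>\<bar> * r ^ multi_degree n \<alpha> \<le> phi_bound" .
  qed
qed

end

theorem lemmaB7:
  fixes n j :: nat and \<xi> :: "nat \<Rightarrow> real" and \<phi> :: "(nat \<Rightarrow> real) \<Rightarrow> real"
  assumes nonneg: "\<And>k. k < n \<Longrightarrow> \<xi> k \<ge> 0"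
    and sum1: "(\<Sum>k<n. \<xi> k) = 1"
    and j: "j < n"
    and phi: "\<phi> = (\<lambda>z. exp (z j) / (\<Sum>k<n. \<xi> k * exp (z k)))"
  shows "\<forall>z. (\<forall>k<n. \<bar>z k\<bar> \<le> 1) \<longrightarrow>
           ((\<lambda>\<alpha>. taylor_coeff n \<phi> \<alpha> * monomial n \<alpha> z) has_sum \<phi> z) (multi_indices n)"
proof (intro allI impI)
  fix z :: "nat \<Rightarrow> real" assume z: "\<forall>k<n. \<bar>z k\<bar> \<le> 1"
  have series: "power_series_on_polydisc n (phi_coeff n j \<xi>) \<phi>"
    unfolding phi by (rule power_series_on_polydisc_phi[OF nonneg sum1 j])
  have "((\<lambda>\<alpha>. taylor_coeff n \<phi> \<alpha> * monomial n \<alpha> z) has_sum \<phi> z) (multi_indices n) \<longleftrightarrow>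
        ((\<lambda>\<alpha>. phi_coeff n j \<xi> \<alpha> * monomial n \<alpha> z) has_sum \<phi> z) (multi_indices n)"
    by (intro has_sum_cong) (simp add: taylor_coeff_power_series_on_polydisc[OF series])
  also have "\<dots>"
    unfolding phi using phi_has_sum[OF nonneg sum1 j z] by simp
  finally show "((\<lambda>\<alpha>. taylor_coeff n \<phi> \<alpha> * monomial n \<alpha> z) has_sum \<phi> z) (multi_indices n)" .
qed

end
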